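(* Consider a bipartite instance of Stochastic Matching, and let $x$ be an optimal solution of (LP-BIP), with optimal value $LP_{bip}$. Fix $\delta\in(0,1)$ and define $\gamma\in[0,1]$ by $\gamma\, LP_{bip}=\sum_{e:\,p_e\ge\delta}w_ep_ex_e$. Run algorithm ALG$_1$ on this instance. Then its expected matching weight is at least $\bigl(\tfrac13\gamma+g(\delta)(1-\gamma)\bigr)LP_{bip}$.
   Context: Stochastic Matching instance: a graph $G=(V,E)$, edge probabilities $p_e\in(0,1]$, edge weights $w_e\ge0$, and vertex timeouts $t_v\in\mathbb{Z}_{>0}$. Edges are probed adaptively, each at most once. A probed edge exists independently with probability $p_e$ and is then irrevocably added to the matching. Only edges with both endpoints unmatched may be probed, and at most $t_v$ edges incident to $v$ may be probed. (LP-BIP) is the linear program: maximize $\sum_e w_ep_ex_e$ subject to - $\sum_{e\in\delta(v)}p_ex_e\le1$ for all $v$; - $\sum_{e\in\delta(v)}x_e\le t_v$ for all $v$; - $0\le x_e\le1$ for all $e$. Here $\delta(v)$ is the set of edges incident to $v$, and $\delta(e)$ is the set of edges other than $e$ sharing an endpoint with $e$. The function $g$ is $g(p)=\frac{1}{2+p}\bigl(1-\exp(-\frac{2+p}{p}\ln\frac1{1-p})\bigr)$ for $p\in(0,1)$, with $g(1)=\frac13$. ALG$_1$ proceeds as follows: 1. Take an optimal solution $x$ of (LP-BIP). 2. Produce a random edge set $\hat E$ by the dependent rounding of Gandhi et al. (GKPS). Writing $\hat x_e=\mathbf1[e\in\hat E]$, this rounding satisfies: - $\Pr[\hat x_e=1]=x_e$;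 - $\sum_{e\in\delta(v)}\hat x_e\le\lceil\sum_{e\in\delta(v)}x_e\rceil$ for all $v$; - negative correlation: for every $v$, every $S\subseteq\delta(v)$ and every $b\in\{0,1\}$, $\Pr[\bigwedge_{e\in S}\hat x_e=b]\le\prod_{e\in S}\Pr[\hat x_e=b]$. 3. Independently draw $Y_e$ with $\Pr[Y_e\le y]=\frac{1}{p_e}(1-e^{-p_ey})$ for $y\in[0,\frac1{p_e}\ln\frac1{1-p_e}]$. 4. Consider the edges of $\hat E$ in increasing order of $Y_e$, and probe $e$ if no edge of $\delta(e)\cap\hat E$ has already been added to the matching. *)

theory Defs
  imports "HOL-Probability.Probability"
begin

text \<open>Bipartite instance: left vertices of type 'a, right vertices of type 'b,
  an edge is a pair (u,v) with u on the left and v on the right.\<close>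

definition deltaL :: "('a \<times> 'b) set \<Rightarrow> 'a \<Rightarrow> ('a \<times> 'b) set" where
  "deltaL E u = {e \<in> E. fst e = u}"

definition deltaR :: "('a \<times> 'b) set \<Rightarrow> 'b \<Rightarrow> ('a \<times> 'b) set" where
  "deltaR E v = {e \<in> E. snd e = v}"

definition adj :: "('a \<times> 'b) \<Rightarrow> ('a \<times> 'b) \<Rightarrow> bool" where
  "adj e f = (e \<noteq> f \<and> (fst e = fst f \<or> snd e = snd f))"

definition lp_feasible ::
  "('a \<times> 'b) set \<Rightarrow> ('a \<times> 'b \<Rightarrow> real) \<Rightarrow> ('a \<Rightarrow> nat) \<Rightarrow> ('b \<Rightarrow> nat) \<Rightarrow> ('a \<times> 'b \<Rightarrow> real) \<Rightarrow> bool" where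
  "lp_feasible E p tL tR x =
     ((\<forall>u. (\<Sum>e\<in>deltaL E u. p e * x e) \<le> 1) \<and>
      (\<forall>v. (\<Sum>e\<in>deltaR E v. p e * x e) \<le> 1) \<and>
      (\<forall>u. (\<Sum>e\<in>deltaL E u. x e) \<le> real (tL u)) \<and>
      (\<forall>v. (\<Sum>e\<in>deltaR E v. x e) \<le> real (tR v)) \<and>
      (\<forall>e\<in>E. 0 \<le> x e \<and> x e \<le> 1))"

definition lp_obj :: "('a \<times> 'b) set \<Rightarrow> ('a \<times> 'b \<Rightarrow> real) \<Rightarrow> ('a \<times> 'b \<Rightarrow> real) \<Rightarrow> ('a \<times> 'b \<Rightarrow> real) \<Rightarrow> real" where
  "lp_obj E p w x = (\<Sum>e\<in>E. w e * p e * x e)"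

definition lp_optimal ::
  "('a \<times> 'b) set \<Rightarrow> ('a \<times> 'b \<Rightarrow> real) \<Rightarrow> ('a \<times> 'b \<Rightarrow> real) \<Rightarrow> ('a \<Rightarrow> nat) \<Rightarrow> ('b \<Rightarrow> nat) \<Rightarrow> ('a \<times> 'b \<Rightarrow> real) \<Rightarrow> bool" where
  "lp_optimal E p w tL tR x =
     (lp_feasible E p tL tR x \<and>
      (\<forall>x'. lp_feasible E p tL tR x' \<longrightarrow> lp_obj E p w x' \<le> lp_obj E p w x))"

text \<open>Properties of the GKPS dependent rounding, as a distribution D over edge sets.\<close>
definition gkps_rounding ::
  "('a \<times> 'b) set \<Rightarrow> ('a \<times> 'b \<Rightarrow> real) \<Rightarrow> ('a \<times> 'b) set pmf \<Rightarrow> bool" where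
  "gkps_rounding E x D =
     ((\<forall>H\<in>set_pmf D. H \<subseteq> E) \<and>
      (\<forall>e\<in>E. measure_pmf.prob D {H. e \<in> H} = x e) \<and>
      (\<forall>H\<in>set_pmf D. \<forall>u. real (card (deltaL H u)) \<le> of_int \<lceil>\<Sum>e\<in>deltaL E u. x e\<rceil>) \<and>
      (\<forall>H\<in>set_pmf D. \<forall>v. real (card (deltaR H v)) \<le> of_int \<lceil>\<Sum>e\<in>deltaR E v. x e\<rceil>) \<and>
      (\<forall>u S b. S \<subseteq> deltaL E u \<longrightarrow>
         measure_pmf.prob D {H. \<forall>e\<in>S. (e \<in> H) = b} \<le> (\<Prod>e\<in>S. measure_pmf.prob D {H. (e \<in> H) = b})) \<and>
      (\<forall>v S b. S \<subseteq> deltaR E v \<longrightarrow>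
         measure_pmf.prob D {H. \<forall>e\<in>S. (e \<in> H) = b} \<le> (\<Prod>e\<in>S. measure_pmf.prob D {H. (e \<in> H) = b})))"

text \<open>Distribution of Y_e: CDF (1/q)(1 - exp(-q y)) on [0, (1/q) ln (1/(1-q))],
  i.e. density exp(-q y) there (for q = 1 the interval is [0,\<infinity>)).\<close>
definition Ydist :: "real \<Rightarrow> real measure" where
  "Ydist q = density lborel
     (\<lambda>y. ennreal (if 0 \<le> y \<and> (q = 1 \<or> y \<le> ln (1 / (1 - q)) / q) then exp (- q * y) else 0))"

fun greedy_probe :: "('a \<times> 'b \<Rightarrow> bool) \<Rightarrow> ('a \<times> 'b) list \<Rightarrow> ('a \<times> 'b) set \<Rightarrow> ('a \<times> 'b) set" where
  "greedy_probe X [] M = M"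
| "greedy_probe X (e # es) M =
     greedy_probe X es (if (\<exists>f\<in>M. adj e f) then M else if X e then insert e M else M)"

text \<open>Matching produced by ALG1 given the rounded set H, the keys Y and existence outcomes X:
  edges of H in increasing order of Y (ties, a null event, broken arbitrarily).\<close>
definition alg1_matching ::
  "('a \<times> 'b) set \<Rightarrow> ('a \<times> 'b \<Rightarrow> real) \<Rightarrow> ('a \<times> 'b \<Rightarrow> bool) \<Rightarrow> ('a \<times> 'b) set" where
  "alg1_matching H Y X = greedy_probe X (sort_key Y (SOME es. distinct es \<and> set es = H)) {}"

definition alg1_value ::
  "('a \<times> 'b) set \<Rightarrow> ('a \<times> 'b \<Rightarrow> real) \<Rightarrow> ('a \<times> 'b \<Rightarrow> real) \<Rightarrow> ('a \<times> 'b) set pmf \<Rightarrow> real" where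
  "alg1_value E p w D =
     measure_pmf.expectation D (\<lambda>H.
       \<integral>Y. measure_pmf.expectation (Pi_pmf E False (\<lambda>e. bernoulli_pmf (p e)))
              (\<lambda>X. \<Sum>e\<in>alg1_matching H Y X. w e)
         \<partial>(PiM E (\<lambda>e. Ydist (p e))))"

definition g :: "real \<Rightarrow> real" where
  "g q = (if q = 1 then 1/3
          else 1 / (2 + q) * (1 - exp (- ((2 + q) / q) * ln (1 / (1 - q)))))"

end

theory Submission
  imports Defs
begin

(*
  Condition on the rounded edge set H and the keys Y.  An edge e of H is matched as soon as
  it exists and no adjacent edge of H with a smaller key exists; by independence this has
  probability at least p e times the product of 1 - p f over those edges f.  Given Y e = y,
  the law of the keys makes each such factor at least exp (- p f * y) on average, so e
  contributes at least w e * p e times the integral of exp (- y * S) against the law of Y e,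
  where S is the p-mass of the neighbours of e in H.  Negative correlation of the rounding and
  the LP constraints bound the mean of S given e in H by 2, and Jensen's inequality turns this
  into x e times the integral of exp (- 2 * y), which is x e * g (p e).  As g is antitone with
  g 1 = 1/3, splitting the LP value at the threshold delta gives the bound.
*)

lemma nn_integral_exp_neg_interval:
  fixes a b :: real
  assumes "0 < a" "0 \<le> b"
  shows "(\<integral>\<^sup>+ y. ennreal (indicator {0..b} y * exp (- a * y)) \<partial>lborel) = ennreal ((1 - exp (- a * b)) / a)"
proof -
  have "((\<lambda>y. exp (- a * y)) has_integral (- exp (- a * b) / a) - (- exp (- a * 0) / a)) {0..b}"
  proof (rule fundamental_theorem_of_calculus)
    fix y :: real assume "y \<in> {0..b}"
    show "((\<lambda>y. - exp (- a * y) / a) has_vector_derivative exp (- a * y)) (at y within {0..b})"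
      using assms(1)
      by (auto intro!: derivative_eq_intros simp: has_real_derivative_iff_has_vector_derivative[symmetric])
  qed fact
  then have "((\<lambda>y. exp (- a * y)) has_integral (1 - exp (- a * b)) / a) {0..b}"
    by (simp add: diff_divide_distrib)
  from nn_integral_has_integral_lebesgue[OF _ this] show ?thesis by simp
qed

lemma nn_integral_exp_neg_atLeast:
  fixes a :: real
  assumes "0 < a"
  shows "(\<integral>\<^sup>+ y. ennreal (indicator {0..} y * exp (- a * y)) \<partial>lborel) = ennreal (1 / a)"
  using nn_integral_has_integral_lebesgue[OF _ has_integral_exp_minus_to_infinity[OF assms, of 0]]
  by simp

definition Ydist_support :: "real \<Rightarrow> real set" where
  "Ydist_support q = (if q = 1 then {0..} else {0..ln (1 / (1 - q)) / q})"

lemma Ydist_support_borel [measurable]: "Ydist_support q \<in> sets borel"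
  by (simp add: Ydist_support_def)

lemma Ydist_support_nonneg: "y \<in> Ydist_support q \<Longrightarrow> 0 \<le> y"
  by (auto simp: Ydist_support_def split: if_splits)

lemma Ydist_eq_density:
  "Ydist q = density lborel (\<lambda>y. ennreal (indicator (Ydist_support q) y * exp (- q * y)))"
  unfolding Ydist_def Ydist_support_def
  by (rule arg_cong[where f = "density lborel"]) (auto simp: fun_eq_iff indicator_def)

lemma sets_Ydist [simp]: "sets (Ydist q) = sets borel"
  by (simp add: Ydist_def)

lemma space_Ydist [simp]: "space (Ydist q) = UNIV"
  by (simp add: Ydist_def)

lemma measurable_Ydist: "measurable (Ydist q) N = measurable borel N"
  by (rule measurable_cong_sets) simp_all

lemma AE_Ydist_nonneg: "AE y in Ydist q. 0 \<le> y"
  unfolding Ydist_eq_density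
  by (subst AE_density) (auto simp: indicator_def dest: Ydist_support_nonneg)

text \<open>Both cases of the support are covered by one formula because \<open>0 powr a = 0\<close>.\<close>

lemma nn_integral_Ydist_exp_neg:
  fixes q c :: real
  assumes "0 < q" "q \<le> 1" "0 \<le> c"
  shows "(\<integral>\<^sup>+ y. ennreal (exp (- c * y)) \<partial>Ydist q) = ennreal ((1 - (1 - q) powr ((q + c) / q)) / (q + c))"
proof -
  have qc: "0 < q + c" using assms by simp
  have "(\<integral>\<^sup>+ y. ennreal (exp (- c * y)) \<partial>Ydist q)
      = (\<integral>\<^sup>+ y. ennreal (indicator (Ydist_support q) y * exp (- (q + c) * y)) \<partial>lborel)"
    unfolding Ydist_eq_density
    by (subst nn_integral_density)
       (auto intro!: nn_integral_cong simp: Ydist_support_def ennreal_mult'[symmetric] indicator_def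
         mult_exp_exp algebra_simps)
  also have "\<dots> = ennreal ((1 - (1 - q) powr ((q + c) / q)) / (q + c))"
  proof (cases "q = 1")
    case True
    then show ?thesis using nn_integral_exp_neg_atLeast[OF qc] by (simp add: Ydist_support_def)
  next
    case False
    then have q1: "q < 1" using assms by simp
    have "exp (- (q + c) * (ln (1 / (1 - q)) / q)) = (1 - q) powr ((q + c) / q)"
      using assms q1 by (simp add: powr_def ln_div field_simps)
    moreover have "0 \<le> ln (1 / (1 - q)) / q"
      using assms q1 by (auto intro!: divide_nonneg_pos)
    ultimately show ?thesis
      using nn_integral_exp_neg_interval[OF qc] False by (simp add: Ydist_support_def)
  qed
  finally show ?thesis .
qed

lemma prob_space_Ydist:
  assumes "0 < q" "q \<le> 1"
  shows "prob_space (Ydist q)"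
proof
  have "emeasure (Ydist q) (space (Ydist q)) = (\<integral>\<^sup>+ y. ennreal (exp (- 0 * y)) \<partial>Ydist q)"
    by (simp add: nn_integral_const)
  then show "emeasure (Ydist q) (space (Ydist q)) = 1"
    using nn_integral_Ydist_exp_neg[OF assms, of 0] assms by simp
qed

lemma nn_integral_Ydist_exp_neg_two:
  assumes "0 < q" "q \<le> 1"
  shows "(\<integral>\<^sup>+ y. ennreal (exp (- 2 * y)) \<partial>Ydist q) = ennreal (g q)"
proof -
  have "(1 - (1 - q) powr ((q + 2) / q)) / (q + 2) = g q"
  proof (cases "q = 1")
    case False
    then have "0 < 1 - q" using assms by simp
    then show ?thesis
      using assms False by (simp add: g_def powr_def ln_div field_simps)
  qed (simp add: g_def)
  then show ?thesis
    using nn_integral_Ydist_exp_neg[OF assms, of 2] by simp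
qed

lemma emeasure_Ydist_atMost_le:
  assumes "0 < q" "0 \<le> y"
  shows "emeasure (Ydist q) {..y} \<le> ennreal ((1 - exp (- q * y)) / q)"
proof -
  have "emeasure (Ydist q) {..y}
      = (\<integral>\<^sup>+ s. ennreal (indicator (Ydist_support q) s * exp (- q * s)) * indicator {..y} s \<partial>lborel)"
    unfolding Ydist_eq_density by (subst emeasure_density) auto
  also have "\<dots> \<le> (\<integral>\<^sup>+ s. ennreal (indicator {0..y} s * exp (- q * s)) \<partial>lborel)"
    by (intro nn_integral_mono) (auto simp: indicator_def dest: Ydist_support_nonneg)
  also have "\<dots> = ennreal ((1 - exp (- q * y)) / q)"
    by (rule nn_integral_exp_neg_interval[OF assms])
  finally show ?thesis .
qed

text \<open>The choice of the law of \<open>Y\<close> is made exactly so that this bound holds: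
  an edge of probability \<open>q\<close> with key \<open>Y\<close> blocks another edge with key \<open>y\<close>
  with probability at most \<open>1 - exp (- q * y)\<close>.\<close>

lemma nn_integral_Ydist_not_blocking:
  assumes "0 < q" "q \<le> 1" "0 \<le> y"
  shows "ennreal (exp (- q * y)) \<le> (\<integral>\<^sup>+ s. ennreal (if s \<le> y then 1 - q else 1) \<partial>Ydist q)"
proof -
  interpret prob_space "Ydist q" by (rule prob_space_Ydist[OF assms(1,2)])
  have "0 \<le> (1 - exp (- q * y)) / q"
    using assms by (intro divide_nonneg_pos) auto
  then have "measure (Ydist q) {..y} \<le> (1 - exp (- q * y)) / q"
    using emeasure_Ydist_atMost_le[OF assms(1,3)] by (simp add: emeasure_eq_measure)
  then have "q * measure (Ydist q) {..y} \<le> 1 - exp (- q * y)"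
    using assms(1) by (simp add: field_simps)
  moreover have "(\<integral>\<^sup>+ s. ennreal (if s \<le> y then 1 - q else 1) \<partial>Ydist q) = ennreal (1 - q * measure (Ydist q) {..y})"
  proof -
    have int: "integrable (Ydist q) (\<lambda>s. 1 - q * indicator {..y} s)"
      by (auto simp: emeasure_eq_measure)
    have "(\<integral>\<^sup>+ s. ennreal (if s \<le> y then 1 - q else 1) \<partial>Ydist q)
        = ennreal (\<integral> s. (1 - q * indicator {..y} s) \<partial>Ydist q)"
      by (subst nn_integral_eq_integral[OF int, symmetric])
         (use assms in \<open>auto intro!: nn_integral_cong simp: indicator_def\<close>)
    also have "(\<integral> s. (1 - q * indicator {..y} s) \<partial>Ydist q) = 1 - q * measure (Ydist q) {..y}"
      using int prob_space by (simp add: emeasure_eq_measure)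
    finally show ?thesis .
  qed
  ultimately show ?thesis by (simp add: ennreal_leI)
qed

lemma ln_one_minus_div_antimono:
  fixes p q s :: real
  assumes "0 < p" "p \<le> q" "0 \<le> s" "0 < 1 - q * s"
  shows "ln (1 - q * s) / q \<le> ln (1 - p * s) / p"
proof -
  have q: "0 < q" using assms by simp
  define u where "u = p / q"
  have u: "0 \<le> u" "u \<le> 1" using assms q by (auto simp: u_def)
  have "(1 - u) * ln 1 + u * ln (1 - q * s) \<le> ln ((1 - u) *\<^sub>R 1 + u *\<^sub>R (1 - q * s))"
    by (rule concave_onD[OF ln_concave]) (use u assms(4) in auto)
  moreover have "(1 - u) *\<^sub>R 1 + u *\<^sub>R (1 - q * s) = 1 - p * s"
    using q by (simp add: u_def field_simps)
  ultimately have "(1 - u) * ln 1 + u * ln (1 - q * s) \<le> ln (1 - p * s)"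
    by (simp only:)
  then have "u * ln (1 - q * s) \<le> ln (1 - p * s)"
    by simp
  then have "p * (ln (1 - q * s) / q) \<le> ln (1 - p * s)"
    by (simp add: u_def)
  then show ?thesis using assms(1) by (simp add: field_simps)
qed

lemma powr_one_minus_antimono:
  fixes p q s :: real
  assumes "0 < p" "p \<le> q" "q \<le> 1" "0 \<le> s" "s \<le> 1"
  shows "(1 - q * s) powr (2 / q) \<le> (1 - p * s) powr (2 / p)"
proof (cases "1 - q * s = 0")
  case False
  have "q * s \<le> 1" using assms by (simp add: mult_le_one)
  then have pos: "0 < 1 - q * s" using False by simp
  moreover have "p * s \<le> q * s" using assms by (simp add: mult_right_mono)
  ultimately have "0 < 1 - p * s" by simp
  moreover have "2 / q * ln (1 - q * s) \<le> 2 / p * ln (1 - p * s)"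
    using ln_one_minus_div_antimono[OF assms(1,2,4) pos] by (simp add: field_simps)
  ultimately show ?thesis using pos by (simp add: powr_def)
qed simp

lemma g_has_integral:
  fixes q :: real
  assumes "0 < q" "q \<le> 1"
  shows "((\<lambda>s. (1 - q * s) powr (2 / q)) has_integral g q) {0..1}"
proof (cases "q = 1")
  case True
  let ?F = "\<lambda>s::real. - ((1 - s) ^ 3) / 3"
  have "((\<lambda>s. (1 - s) ^ 2) has_integral (?F 1 - ?F 0)) {0..1::real}"
  proof (rule fundamental_theorem_of_calculus)
    fix s :: real assume "s \<in> {0..1}"
    show "(?F has_vector_derivative (1 - s) ^ 2) (at s within {0..1})"
      by (auto intro!: derivative_eq_intros
          simp: has_real_derivative_iff_has_vector_derivative[symmetric] power2_eq_square)
  qed simp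
  moreover have "(1 - s) ^ 2 = (1 - 1 * s) powr (2 / 1)" if "s \<in> {0..1::real}" for s
    using that by (simp add: powr_numeral)
  ultimately have "((\<lambda>s. (1 - 1 * s) powr (2 / 1)) has_integral 1 / 3) {0..1::real}"
    using has_integral_cong[of "{0..1::real}" "\<lambda>s. (1 - s) ^ 2" "\<lambda>s. (1 - 1 * s) powr (2 / 1)"]
    by simp
  then show ?thesis using True by (simp add: g_def)
next
  case False
  then have q1: "q < 1" using assms by simp
  let ?G = "\<lambda>s. - ((1 - q * s) powr ((2 + q) / q)) / (2 + q)"
  have "((\<lambda>s. (1 - q * s) powr (2 / q)) has_integral (?G 1 - ?G 0)) {0..1}"
  proof (rule fundamental_theorem_of_calculus)
    fix s :: real assume s: "s \<in> {0..1}"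
    have "q * s \<le> q" using s assms by (intro mult_left_le) auto
    then have pos: "0 < 1 - q * s" using q1 by linarith
    have "(?G has_real_derivative
            - (((2 + q) / q) * (1 - q * s) powr ((2 + q) / q - 1) * (- q)) / (2 + q)) (at s within {0..1})"
      using pos by (auto intro!: derivative_eq_intros)
    moreover have "(2 + q) / q - 1 = 2 / q" using assms by (simp add: field_simps)
    moreover have "- (((2 + q) / q) * A * (- q)) / (2 + q) = A" for A :: real
    proof -
      have "((2 + q) / q) * A * (- q) = - ((2 + q) * A)" using assms by simp
      then show ?thesis using assms by simp
    qed
    ultimately show "(?G has_vector_derivative (1 - q * s) powr (2 / q)) (at s within {0..1})"
      by (simp add: has_real_derivative_iff_has_vector_derivative)
  qed simp
  moreover have "?G 1 - ?G 0 = g q"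
  proof -
    have "(1 - q) powr ((2 + q) / q) = exp (- ((2 + q) / q) * ln (1 / (1 - q)))"
      using q1 by (simp add: powr_def ln_div)
    then show ?thesis using False assms by (simp add: g_def field_simps)
  qed
  ultimately show ?thesis by simp
qed

lemma g_antimono:
  assumes "0 < p" "p \<le> q" "q \<le> 1"
  shows "g q \<le> g p"
proof (rule has_integral_le[OF g_has_integral[of q] g_has_integral[of p]])
  fix s :: real assume "s \<in> {0..1}"
  then show "(1 - q * s) powr (2 / q) \<le> (1 - p * s) powr (2 / p)"
    using powr_one_minus_antimono[OF assms] by auto
qed (use assms in auto)

lemma g_ge_one_third:
  assumes "0 < q" "q \<le> 1"
  shows "1 / 3 \<le> g q"
  using g_antimono[OF assms order_refl] by (simp add: g_def)

lemma greedy_probe_append: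
  "greedy_probe X (xs @ ys) M = greedy_probe X ys (greedy_probe X xs M)"
  by (induction xs arbitrary: M) auto

lemma greedy_probe_mono: "M \<subseteq> greedy_probe X xs M"
  by (induction xs arbitrary: M) (auto, blast+)

lemma greedy_probe_subset: "greedy_probe X xs M \<subseteq> M \<union> {f \<in> set xs. X f}"
proof (induction xs arbitrary: M)
  case (Cons e xs)
  show ?case
    using Cons[of "if \<exists>f\<in>M. adj e f then M else if X e then insert e M else M"]
    by (auto split: if_splits)
qed simp

text \<open>Everything matched before \<open>e\<close> consists of existing edges with smaller keys, none of
  which is adjacent to \<open>e\<close>.\<close>

lemma greedy_probe_first_memI:
  assumes "sorted (map Y L)" "e \<in> set L" "X e"
    and "\<forall>f\<in>set L. adj e f \<and> X f \<longrightarrow> Y e < Y f"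
  shows "e \<in> greedy_probe X L {}"
proof -
  obtain L1 L2 where L: "L = L1 @ e # L2" using assms(2) by (meson split_list)
  have before: "\<forall>f\<in>set L1. Y f \<le> Y e" using assms(1) unfolding L by (auto simp: sorted_append)
  define M1 where "M1 = greedy_probe X L1 {}"
  have "M1 \<subseteq> {f \<in> set L1. X f}" using greedy_probe_subset[of X L1 "{}"] by (simp add: M1_def)
  then have "\<not> (\<exists>f\<in>M1. adj e f)" using before assms(4) unfolding L by force
  then have "greedy_probe X L {} = greedy_probe X L2 (insert e M1)"
    using assms(3) by (simp add: L greedy_probe_append M1_def)
  then show ?thesis using greedy_probe_mono[of "insert e M1" X L2] by auto
qed

lemma alg1_matching_eq_greedy_probe:
  assumes "finite H"
  obtains L where "set L = H" "\<And>Y X. alg1_matching H Y X = greedy_probe X (sort_key Y L) {}"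
proof -
  obtain L where "distinct L \<and> set L = H" using finite_distinct_list[OF assms] by blast
  then have "set (SOME L. distinct L \<and> set L = H) = H"
    by (metis (mono_tags, lifting) someI)
  then show thesis using that by (simp add: alg1_matching_def)
qed

lemma alg1_matching_subset:
  assumes "finite H"
  shows "alg1_matching H Y X \<subseteq> H"
proof -
  obtain L where "set L = H" "alg1_matching H Y X = greedy_probe X (sort_key Y L) {}"
    using alg1_matching_eq_greedy_probe[OF assms] by metis
  then show ?thesis
    using greedy_probe_subset[of X "sort_key Y L" "{}"] by auto
qed

lemma alg1_matching_memI:
  assumes "finite H" "e \<in> H" "X e" "\<forall>f\<in>H. adj e f \<and> X f \<longrightarrow> Y e < Y f"
  shows "e \<in> alg1_matching H Y X"
proof -
  obtain L where "set L = H" "alg1_matching H Y X = greedy_probe X (sort_key Y L) {}"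
    using alg1_matching_eq_greedy_probe[OF assms(1)] by metis
  then show ?thesis
    using assms(2-4) by (auto intro!: greedy_probe_first_memI)
qed

lemma measurable_component_real:
  fixes Ms :: "'i \<Rightarrow> real measure"
  assumes "\<forall>i\<in>E. sets (Ms i) = sets borel" "i \<in> E"
  shows "(\<lambda>Y. Y i :: real) \<in> borel_measurable (PiM E Ms)"
  using measurable_component_singleton[of i E Ms] assms measurable_cong_sets by blast

lemma measurable_count_space_finite_range:
  assumes "f \<in> measurable M (count_space UNIV)" "f \<in> space M \<rightarrow> A" "finite A"
  shows "f \<in> measurable M (count_space A)"
  unfolding measurable_count_space_eq2[OF assms(3)]
  using assms(2) measurable_sets[OF assms(1), of "{_}"] by auto

lemma measurable_insort_key:
  fixes Ms :: "'i \<Rightarrow> real measure"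
  assumes "\<forall>i\<in>E. sets (Ms i) = sets borel" "e \<in> E" "set L \<subseteq> E"
  shows "(\<lambda>Y. insort_key Y e L) \<in> measurable (PiM E Ms) (count_space UNIV)"
  using assms(3)
proof (induction L)
  case (Cons f L)
  have f: "f \<in> E" using Cons by simp
  have IH: "(\<lambda>Y. insort_key Y e L) \<in> measurable (PiM E Ms) (count_space UNIV)" using Cons by simp
  have cons: "(\<lambda>Y. f # insort_key Y e L) \<in> measurable (PiM E Ms) (count_space UNIV)"
    using measurable_compose[OF IH measurable_count_space[of "(#) f" UNIV]] by simp
  have le: "{Y \<in> space (PiM E Ms). Y e \<le> Y f} \<in> sets (PiM E Ms)"
    using borel_measurable_le[OF measurable_component_real[OF assms(1,2)] measurable_component_real[OF assms(1) f]]
    by simp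
  show ?case
    by (simp only: insort_key.simps) (intro measurable_If cons measurable_const le, simp)
qed simp

lemma measurable_sort_key:
  fixes Ms :: "'i \<Rightarrow> real measure"
  assumes "\<forall>i\<in>E. sets (Ms i) = sets borel" "set L \<subseteq> E"
  shows "(\<lambda>Y. sort_key Y L) \<in> measurable (PiM E Ms) (count_space UNIV)"
  using assms(2)
proof (induction L)
  case (Cons e L)
  let ?R = "{L'. set L' \<subseteq> set L \<and> length L' = length L}"
  have fin: "finite ?R" using finite_lists_length_eq[of "set L" "length L"] by simp
  have "(\<lambda>Y. sort_key Y L) \<in> measurable (PiM E Ms) (count_space ?R)"
    by (rule measurable_count_space_finite_range[OF _ _ fin]) (use Cons in auto)
  then have "(\<lambda>Y. (\<lambda>L' Y. insort_key Y e L') (sort_key Y L) Y) \<in> measurable (PiM E Ms) (count_space UNIV)"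
  proof (rule measurable_compose_countable'[rotated])
    fix L' assume "L' \<in> ?R"
    then show "(\<lambda>Y. insort_key Y e L') \<in> measurable (PiM E Ms) (count_space UNIV)"
      using Cons by (intro measurable_insort_key[OF assms(1)]) auto
  qed (simp add: countable_finite fin)
  then show ?case by simp
qed simp

lemma expectation_Pi_pmf_bernoulli_only:
  fixes E :: "'i set"
  assumes "finite E" "e \<in> E" "e \<notin> N" "\<forall>f\<in>E. 0 \<le> p f \<and> p f \<le> 1"
  shows "measure_pmf.expectation (Pi_pmf E False (\<lambda>f. bernoulli_pmf (p f)))
           (\<lambda>X. of_bool (X e \<and> (\<forall>f\<in>N \<inter> E. \<not> X f)) :: real)
         = p e * (\<Prod>f\<in>E - {e}. if f \<in> N then 1 - p f else 1)"
proof -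
  define h where "h f b = (if f = e then of_bool b else if f \<in> N then of_bool (\<not> b) else (1::real))" for f b
  have "of_bool (X e \<and> (\<forall>f\<in>N \<inter> E. \<not> X f)) = (\<Prod>f\<in>E. h f (X f))" for X
  proof (cases "X e \<and> (\<forall>f\<in>N \<inter> E. \<not> X f)")
    case True
    then have "\<forall>f\<in>E. h f (X f) = 1" by (auto simp: h_def)
    then have "(\<Prod>f\<in>E. h f (X f)) = 1" by (rule prod.neutral)
    with True show ?thesis by simp
  next
    case False
    have "\<exists>f\<in>E. h f (X f) = 0"
    proof (cases "X e")
      case True
      with False obtain f where "f \<in> N \<inter> E" "X f" by blast
      then show ?thesis using assms(3) by (intro bexI[of _ f]) (auto simp: h_def)
    next
      case False
      then show ?thesis using assms(2) by (intro bexI[of _ e]) (auto simp: h_def)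
    qed
    then have "(\<Prod>f\<in>E. h f (X f)) = 0" using assms(1) by simp
    with False show ?thesis by simp
  qed
  then have "measure_pmf.expectation (Pi_pmf E False (\<lambda>f. bernoulli_pmf (p f)))
           (\<lambda>X. of_bool (X e \<and> (\<forall>f\<in>N \<inter> E. \<not> X f)) :: real)
      = measure_pmf.expectation (Pi_pmf E False (\<lambda>f. bernoulli_pmf (p f))) (\<lambda>X. \<Prod>f\<in>E. h f (X f))"
    by (simp only:)
  also have "\<dots> = (\<Prod>f\<in>E. measure_pmf.expectation (bernoulli_pmf (p f)) (h f))"
    by (rule expectation_prod_Pi_pmf[OF assms(1)]) (auto simp: h_def intro: integrable_measure_pmf_finite)
  also have "\<dots> = (\<Prod>f\<in>E. if f = e then p e else if f \<in> N then 1 - p f else 1)"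
    using assms(4) by (intro prod.cong) (auto simp: h_def)
  also have "\<dots> = p e * (\<Prod>f\<in>E - {e}. if f \<in> N then 1 - p f else 1)"
    using assms(1,2) by (subst prod.remove[of E e]) (auto intro!: prod.cong)
  finally show ?thesis .
qed

lemma finite_set_pmf_Pi_pmf_bernoulli:
  "finite E \<Longrightarrow> finite (set_pmf (Pi_pmf E False (\<lambda>e. bernoulli_pmf (p e))))"
  by (auto simp: set_Pi_pmf)

text \<open>The summand of \<open>e\<close> is \<open>w e\<close> times the probability that \<open>e\<close> exists and no adjacent
  edge of \<open>H\<close> with a smaller key does; that event forces \<open>e\<close> into the matching.\<close>

lemma expectation_alg1_matching_ge:
  fixes E :: "('a \<times> 'b) set"
  assumes "finite E" "H \<subseteq> E" "\<forall>f\<in>E. 0 < p f \<and> p f \<le> 1" "\<forall>f\<in>E. 0 \<le> w f"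
  shows "(\<Sum>e\<in>H. w e * (p e * (\<Prod>f\<in>E - {e}. if f \<in> H \<and> adj e f \<and> Y f \<le> Y e then 1 - p f else 1)))
    \<le> measure_pmf.expectation (Pi_pmf E False (\<lambda>e. bernoulli_pmf (p e)))
         (\<lambda>X. \<Sum>e\<in>alg1_matching H Y X. w e)"
proof -
  let ?PX = "Pi_pmf E False (\<lambda>e. bernoulli_pmf (p e))"
  define N where "N e = {f \<in> H. adj e f \<and> Y f \<le> Y e}" for e
  define first where "first e X = (X e \<and> (\<forall>f\<in>N e \<inter> E. \<not> X f))" for e X
  have finH: "finite H" using assms(1,2) finite_subset by blast
  have int: "integrable ?PX f" for f :: "_ \<Rightarrow> real"
    by (rule integrable_measure_pmf_finite[OF finite_set_pmf_Pi_pmf_bernoulli[OF assms(1)]])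
  have matched: "(\<Sum>e\<in>H. w e * of_bool (first e X)) \<le> (\<Sum>e\<in>alg1_matching H Y X. w e)" for X
  proof -
    have "{e \<in> H. first e X} \<subseteq> alg1_matching H Y X"
    proof
      fix e assume "e \<in> {e \<in> H. first e X}"
      then have "e \<in> H" "X e" "\<forall>f\<in>N e \<inter> E. \<not> X f" by (auto simp: first_def)
      then show "e \<in> alg1_matching H Y X"
        using assms(2) by (intro alg1_matching_memI[OF finH]) (auto simp: N_def not_le)
    qed
    moreover have "alg1_matching H Y X \<subseteq> E"
      using alg1_matching_subset[OF finH] assms(2) by blast
    ultimately have "(\<Sum>e\<in>{e \<in> H. first e X}. w e) \<le> (\<Sum>e\<in>alg1_matching H Y X. w e)"
      using assms(1,4) by (intro sum_mono2) (auto intro: finite_subset)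
    moreover have "(\<Sum>e\<in>H. w e * of_bool (first e X)) = (\<Sum>e\<in>{e \<in> H. first e X}. w e)"
      by (auto simp: sum.inter_filter[OF finH] intro!: sum.cong)
    ultimately show ?thesis by simp
  qed
  have only: "measure_pmf.expectation ?PX (\<lambda>X. of_bool (first e X))
      = p e * (\<Prod>f\<in>E - {e}. if f \<in> N e then 1 - p f else 1)" if "e \<in> H" for e
    unfolding first_def
    by (rule expectation_Pi_pmf_bernoulli_only) (use that assms(1-3) in \<open>auto simp: N_def adj_def\<close>)
  have "(\<Sum>e\<in>H. w e * (p e * (\<Prod>f\<in>E - {e}. if f \<in> H \<and> adj e f \<and> Y f \<le> Y e then 1 - p f else 1)))
      = (\<Sum>e\<in>H. measure_pmf.expectation ?PX (\<lambda>X. w e * of_bool (first e X)))"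
    by (intro sum.cong refl) (simp add: only N_def)
  also have "\<dots> = measure_pmf.expectation ?PX (\<lambda>X. \<Sum>e\<in>H. w e * of_bool (first e X))"
    by (rule Bochner_Integration.integral_sum[symmetric]) (rule int)
  also have "\<dots> \<le> measure_pmf.expectation ?PX (\<lambda>X. \<Sum>e\<in>alg1_matching H Y X. w e)"
    by (rule integral_mono[OF int int matched])
  finally show ?thesis .
qed

lemma product_prob_space_Ydist:
  assumes "\<forall>i\<in>E. 0 < p i \<and> p i \<le> 1"
  shows "product_prob_space (\<lambda>i. Ydist (if i \<in> E then p i else 1))"
proof -
  have "prob_space (Ydist (if i \<in> E then p i else 1))" for i
    using assms by (intro prob_space_Ydist) auto
  then show ?thesis
    by (simp add: product_prob_space_def product_sigma_finite_def product_prob_space_axioms_def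
        prob_space_imp_sigma_finite)
qed

lemma PiM_Ydist_eq:
  "PiM E (\<lambda>i. Ydist (p i)) = PiM E (\<lambda>i. Ydist (if i \<in> E then p i else 1))"
  by (rule PiM_cong) auto

lemma measurable_Ydist_if_le:
  "(\<lambda>s::real. ennreal (if P \<and> s \<le> y then a else b)) \<in> borel_measurable (Ydist q)"
proof (rule measurable_compose[OF _ measurable_ennreal], rule measurable_If)
  show "{s \<in> space (Ydist q). P \<and> s \<le> y} \<in> sets (Ydist q)"
    by (cases P) auto
qed auto

lemma measurable_PiM_if_le:
  fixes Ms :: "'i \<Rightarrow> real measure"
  assumes "\<forall>i\<in>E. sets (Ms i) = sets borel" "a \<in> E" "b \<in> E"
  shows "(\<lambda>Y. if P \<and> Y a \<le> Y b then (c::real) else d) \<in> borel_measurable (PiM E Ms)"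
proof (rule measurable_If)
  have "{Y \<in> space (PiM E Ms). Y a \<le> Y b} \<in> sets (PiM E Ms)"
    using borel_measurable_le[OF measurable_component_real[OF assms(1,2)] measurable_component_real[OF assms(1,3)]]
    by simp
  then show "{Y \<in> space (PiM E Ms). P \<and> Y a \<le> Y b} \<in> sets (PiM E Ms)"
    by (cases P) auto
qed auto

lemma nn_integral_PiM_Ydist_prod_ge:
  fixes I :: "'i set"
  assumes "finite I" "\<forall>i\<in>I. 0 < p i \<and> p i \<le> 1" "0 \<le> y"
  shows "ennreal (exp (- y * (\<Sum>f\<in>I. if f \<in> N then p f else 0)))
    \<le> (\<integral>\<^sup>+ Z. ennreal (\<Prod>f\<in>I. if f \<in> N \<and> Z f \<le> y then 1 - p f else 1) \<partial>PiM I (\<lambda>i. Ydist (p i)))"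
proof -
  let ?M = "\<lambda>i. Ydist (if i \<in> I then p i else 1)"
  interpret product_prob_space ?M
    by (rule product_prob_space_Ydist[OF assms(2)])
  have "ennreal (exp (- y * (\<Sum>f\<in>I. if f \<in> N then p f else 0)))
      = (\<Prod>f\<in>I. ennreal (if f \<in> N then exp (- p f * y) else 1))"
  proof -
    have "(\<Prod>f\<in>I. ennreal (if f \<in> N then exp (- p f * y) else 1))
        = ennreal (\<Prod>f\<in>I. exp (- y * (if f \<in> N then p f else 0)))"
      by (subst prod_ennreal) (auto intro!: arg_cong[where f = ennreal] prod.cong simp: mult.commute)
    then show ?thesis by (simp add: exp_sum[symmetric] sum_distrib_left assms(1))
  qed
  also have "\<dots> \<le> (\<Prod>f\<in>I. \<integral>\<^sup>+ s. ennreal (if f \<in> N \<and> s \<le> y then 1 - p f else 1) \<partial>?M f)"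
  proof (rule prod_mono_ennreal)
    fix f assume f: "f \<in> I"
    show "ennreal (if f \<in> N then exp (- p f * y) else 1)
        \<le> (\<integral>\<^sup>+ s. ennreal (if f \<in> N \<and> s \<le> y then 1 - p f else 1) \<partial>?M f)"
      using f assms(2,3) nn_integral_Ydist_not_blocking[of "p f" y] M.emeasure_space_1[of f]
      by (cases "f \<in> N") auto
  qed
  also have "\<dots> = (\<integral>\<^sup>+ Z. (\<Prod>f\<in>I. ennreal (if f \<in> N \<and> Z f \<le> y then 1 - p f else 1)) \<partial>PiM I ?M)"
    by (rule product_nn_integral_prod[symmetric]) (auto simp: assms(1) intro!: measurable_Ydist_if_le)
  also have "\<dots> = (\<integral>\<^sup>+ Z. ennreal (\<Prod>f\<in>I. if f \<in> N \<and> Z f \<le> y then 1 - p f else 1) \<partial>PiM I (\<lambda>i. Ydist (p i)))"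
    using assms(2) by (simp add: PiM_Ydist_eq[symmetric] prod_ennreal)
  finally show ?thesis .
qed

text \<open>Conditioned on the key \<open>y\<close> of \<open>e\<close>, the other keys are independent, and each
  potentially blocking edge \<open>f\<close> fails to precede \<open>e\<close> or fails to exist with probability
  at least \<open>exp (- p f * y)\<close>.\<close>

lemma nn_integral_Ydist_prod_ge:
  fixes E :: "'i set"
  assumes "finite E" "e \<in> E" "\<forall>i\<in>E. 0 < p i \<and> p i \<le> 1"
  shows "(\<integral>\<^sup>+ y. ennreal (exp (- y * (\<Sum>f\<in>E - {e}. if f \<in> N then p f else 0))) \<partial>Ydist (p e))
    \<le> (\<integral>\<^sup>+ Y. ennreal (\<Prod>f\<in>E - {e}. if f \<in> N \<and> Y f \<le> Y e then 1 - p f else 1) \<partial>PiM E (\<lambda>i. Ydist (p i)))"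
proof -
  let ?M = "\<lambda>i. Ydist (if i \<in> E then p i else 1)"
  interpret product_prob_space ?M
    by (rule product_prob_space_Ydist[OF assms(3)])
  define I where "I = E - {e}"
  have I: "E = insert e I" "finite I" "e \<notin> I" using assms(1,2) by (auto simp: I_def)
  define F where "F Y = (\<Prod>f\<in>I. if f \<in> N \<and> Y f \<le> Y e then 1 - p f else 1)" for Y :: "'i \<Rightarrow> real"
  have "(\<lambda>Y. ennreal (F Y)) \<in> borel_measurable (PiM (insert e I) ?M)"
    unfolding F_def I(1)[symmetric]
    by (intro measurable_compose[OF _ measurable_ennreal] borel_measurable_prod measurable_PiM_if_le)
       (auto simp: I_def assms(2))
  then have "(\<integral>\<^sup>+ Y. ennreal (F Y) \<partial>PiM (insert e I) ?M)
      = (\<integral>\<^sup>+ y. (\<integral>\<^sup>+ Z. ennreal (F (Z(e := y))) \<partial>PiM I ?M) \<partial>?M e)"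
    by (rule product_nn_integral_insert_rev[OF I(2,3)])
  also have "\<dots> \<ge> (\<integral>\<^sup>+ y. ennreal (exp (- y * (\<Sum>f\<in>I. if f \<in> N then p f else 0))) \<partial>?M e)"
  proof (rule nn_integral_mono_AE)
    show "AE y in ?M e. ennreal (exp (- y * (\<Sum>f\<in>I. if f \<in> N then p f else 0)))
        \<le> (\<integral>\<^sup>+ Z. ennreal (F (Z(e := y))) \<partial>PiM I ?M)"
      using AE_Ydist_nonneg
    proof (rule eventually_mono)
      fix y :: real assume "0 \<le> y"
      moreover have "F (Z(e := y)) = (\<Prod>f\<in>I. if f \<in> N \<and> Z f \<le> y then 1 - p f else 1)" for Z
        unfolding F_def using I(3) by (intro prod.cong) auto
      moreover have "PiM I ?M = PiM I (\<lambda>i. Ydist (p i))"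
        by (rule PiM_cong) (auto simp: I_def)
      ultimately show "ennreal (exp (- y * (\<Sum>f\<in>I. if f \<in> N then p f else 0)))
          \<le> (\<integral>\<^sup>+ Z. ennreal (F (Z(e := y))) \<partial>PiM I ?M)"
        using nn_integral_PiM_Ydist_prod_ge[OF I(2), of p y N] assms(3) by (simp add: I_def)
    qed
  qed
  finally show ?thesis
    using assms(2) by (simp add: F_def I_def insert_absorb PiM_Ydist_eq[symmetric])
qed

definition nbr_mass :: "('a \<times> 'b) set \<Rightarrow> ('a \<times> 'b \<Rightarrow> real) \<Rightarrow> ('a \<times> 'b) set \<Rightarrow> 'a \<times> 'b \<Rightarrow> real" where
  "nbr_mass E p H e = (\<Sum>f\<in>E - {e}. if f \<in> H \<and> adj e f then p f else 0)"

definition alg1_value_given ::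
  "('a \<times> 'b) set \<Rightarrow> ('a \<times> 'b \<Rightarrow> real) \<Rightarrow> ('a \<times> 'b \<Rightarrow> real) \<Rightarrow> ('a \<times> 'b) set \<Rightarrow> real" where
  "alg1_value_given E p w H =
     (\<integral>Y. measure_pmf.expectation (Pi_pmf E False (\<lambda>e. bernoulli_pmf (p e)))
            (\<lambda>X. \<Sum>e\<in>alg1_matching H Y X. w e) \<partial>PiM E (\<lambda>e. Ydist (p e)))"

lemma alg1_matching_weight_bounds:
  fixes w :: "'a \<times> 'b \<Rightarrow> real"
  assumes "finite E" "H \<subseteq> E" "\<forall>f\<in>E. 0 \<le> w f"
  shows "0 \<le> (\<Sum>e\<in>alg1_matching H Y X. w e)" "(\<Sum>e\<in>alg1_matching H Y X. w e) \<le> (\<Sum>e\<in>E. w e)"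
proof -
  have sub: "alg1_matching H Y X \<subseteq> E"
    using alg1_matching_subset[of H Y X] assms(1,2) finite_subset by blast
  with assms(3) show "0 \<le> (\<Sum>e\<in>alg1_matching H Y X. w e)"
    by (intro sum_nonneg) blast
  from sub assms(1,3) show "(\<Sum>e\<in>alg1_matching H Y X. w e) \<le> (\<Sum>e\<in>E. w e)"
    by (intro sum_mono2) auto
qed

lemma integrable_alg1_expectation:
  fixes E :: "('a \<times> 'b) set" and w :: "'a \<times> 'b \<Rightarrow> real"
  assumes "finite E" "H \<subseteq> E" "\<forall>f\<in>E. 0 < p f \<and> p f \<le> 1" "\<forall>f\<in>E. 0 \<le> w f"
  shows "integrable (PiM E (\<lambda>e. Ydist (p e)))
    (\<lambda>Y. measure_pmf.expectation (Pi_pmf E False (\<lambda>e. bernoulli_pmf (p e))) (\<lambda>X. \<Sum>e\<in>alg1_matching H Y X. w e))"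
    (is "integrable ?PY ?\<phi>")
proof -
  let ?PX = "Pi_pmf E False (\<lambda>e. bernoulli_pmf (p e))"
  interpret PY: prob_space ?PY
    by (rule prob_space_PiM) (use assms(3) in \<open>auto intro!: prob_space_Ydist\<close>)
  have int: "integrable ?PX f" for f :: "_ \<Rightarrow> real"
    by (rule integrable_measure_pmf_finite[OF finite_set_pmf_Pi_pmf_bernoulli[OF assms(1)]])
  obtain L where L: "set L = H" "\<And>Y X. alg1_matching H Y X = greedy_probe X (sort_key Y L) {}"
    using alg1_matching_eq_greedy_probe assms(1,2) finite_subset by metis
  have "?\<phi> = (\<lambda>L'. measure_pmf.expectation ?PX (\<lambda>X. \<Sum>e\<in>greedy_probe X L' {}. w e)) \<circ> (\<lambda>Y. sort_key Y L)"
    by (simp add: fun_eq_iff L(2))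
  then have "?\<phi> \<in> borel_measurable ?PY"
    using L(1) assms(2) by (simp add: measurable_comp[OF measurable_sort_key])
  moreover have "0 \<le> ?\<phi> Y" for Y
    by (intro integral_nonneg_AE AE_I2) (rule alg1_matching_weight_bounds(1)[OF assms(1,2,4)])
  moreover have "?\<phi> Y \<le> (\<Sum>e\<in>E. w e)" for Y
  proof -
    have "?\<phi> Y \<le> measure_pmf.expectation ?PX (\<lambda>X. \<Sum>e\<in>E. w e)"
      using alg1_matching_weight_bounds(2)[OF assms(1,2,4)] by (intro integral_mono[OF int int])
    then show ?thesis by simp
  qed
  ultimately show ?thesis
    by (intro PY.integrable_const_bound[where B = "\<Sum>e\<in>E. w e"]) auto
qed

lemma alg1_value_given_ge:
  fixes E :: "('a \<times> 'b) set" and w :: "'a \<times> 'b \<Rightarrow> real"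
  assumes "finite E" "H \<subseteq> E" "\<forall>f\<in>E. 0 < p f \<and> p f \<le> 1" "\<forall>f\<in>E. 0 \<le> w f"
  shows "(\<Sum>e\<in>H. ennreal (w e * p e) * (\<integral>\<^sup>+ y. ennreal (exp (- y * nbr_mass E p H e)) \<partial>Ydist (p e)))
    \<le> ennreal (alg1_value_given E p w H)"
proof -
  let ?PY = "PiM E (\<lambda>e. Ydist (p e))"
  define \<phi> where "\<phi> Y = measure_pmf.expectation (Pi_pmf E False (\<lambda>e. bernoulli_pmf (p e)))
      (\<lambda>X. \<Sum>e\<in>alg1_matching H Y X. w e)" for Y
  define F where "F e Y = (\<Prod>f\<in>E - {e}. if f \<in> H \<and> adj e f \<and> Y f \<le> Y e then 1 - p f else 1)"
    for e and Y :: "'a \<times> 'b \<Rightarrow> real"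
  have wp: "0 \<le> w e * p e" if "e \<in> H" for e
  proof -
    have "0 \<le> w e" "0 \<le> p e" using that assms(2-4) by (auto intro: less_imp_le)
    then show ?thesis by simp
  qed
  have F: "0 \<le> F e Y" for e Y
    unfolding F_def using assms(3) by (intro prod_nonneg) auto
  have Fm: "(\<lambda>Y. ennreal (F e Y)) \<in> borel_measurable ?PY" if "e \<in> H" for e
    unfolding F_def
  proof (intro measurable_compose[OF _ measurable_ennreal] borel_measurable_prod)
    fix f assume "f \<in> E - {e}"
    then show "(\<lambda>Y. if f \<in> H \<and> adj e f \<and> Y f \<le> Y e then 1 - p f else 1) \<in> borel_measurable ?PY"
      using measurable_PiM_if_le[where P = "f \<in> H \<and> adj e f" and a = f and b = e] that assms(2)
      by auto
  qed
  have "(\<Sum>e\<in>H. ennreal (w e * p e) * (\<integral>\<^sup>+ y. ennreal (exp (- y * nbr_mass E p H e)) \<partial>Ydist (p e)))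
      \<le> (\<Sum>e\<in>H. ennreal (w e * p e) * (\<integral>\<^sup>+ Y. ennreal (F e Y) \<partial>?PY))"
  proof (intro sum_mono mult_left_mono)
    fix e assume "e \<in> H"
    then show "(\<integral>\<^sup>+ y. ennreal (exp (- y * nbr_mass E p H e)) \<partial>Ydist (p e)) \<le> (\<integral>\<^sup>+ Y. ennreal (F e Y) \<partial>?PY)"
      using nn_integral_Ydist_prod_ge[OF assms(1) _ assms(3), of e "{f. f \<in> H \<and> adj e f}"] assms(2)
      by (auto simp: nbr_mass_def F_def conj_assoc)
  qed auto
  also have "\<dots> = (\<integral>\<^sup>+ Y. (\<Sum>e\<in>H. ennreal (w e * p e) * ennreal (F e Y)) \<partial>?PY)"
    using Fm by (simp add: nn_integral_sum nn_integral_cmult)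
  also have "\<dots> \<le> (\<integral>\<^sup>+ Y. ennreal (\<phi> Y) \<partial>?PY)"
  proof (rule nn_integral_mono)
    fix Y
    have "(\<Sum>e\<in>H. ennreal (w e * p e) * ennreal (F e Y)) = ennreal (\<Sum>e\<in>H. w e * (p e * F e Y))"
    proof -
      have "0 \<le> w e * (p e * F e Y)" if "e \<in> H" for e
        using mult_nonneg_nonneg[OF wp[OF that] F] by (simp add: mult.assoc)
      then show ?thesis using wp F by (simp add: ennreal_mult[symmetric] sum_ennreal mult.assoc)
    qed
    also have "\<dots> \<le> ennreal (\<phi> Y)"
      unfolding \<phi>_def F_def using expectation_alg1_matching_ge[OF assms] by (rule ennreal_leI)
    finally show "(\<Sum>e\<in>H. ennreal (w e * p e) * ennreal (F e Y)) \<le> ennreal (\<phi> Y)" .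
  qed
  also have "\<dots> = ennreal (alg1_value_given E p w H)"
    unfolding alg1_value_given_def \<phi>_def
    by (intro nn_integral_eq_integral integrable_alg1_expectation[OF assms] AE_I2 integral_nonneg_AE)
       (rule alg1_matching_weight_bounds(1)[OF assms(1,2,4)])
  finally show ?thesis .
qed

text \<open>Jensen's inequality for \<open>exp\<close>, through the tangent line at \<open>B\<close>.\<close>

lemma sum_exp_neg_ge:
  fixes a S :: "'h \<Rightarrow> real"
  assumes "\<And>H. H \<in> A \<Longrightarrow> 0 \<le> a H" "(\<Sum>H\<in>A. a H * S H) \<le> (\<Sum>H\<in>A. a H) * B" "0 \<le> y"
  shows "(\<Sum>H\<in>A. a H) * exp (- B * y) \<le> (\<Sum>H\<in>A. a H * exp (- y * S H))"
proof -
  let ?X = "\<Sum>H\<in>A. a H"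
  have "?X * exp (- B * y) \<le> exp (- y * B) * (?X - y * ((\<Sum>H\<in>A. a H * S H) - ?X * B))"
  proof -
    have "y * ((\<Sum>H\<in>A. a H * S H) - ?X * B) \<le> 0"
      using assms(2,3) by (simp add: mult_nonneg_nonpos)
    then show ?thesis by (simp add: mult_left_mono mult.commute)
  qed
  also have "\<dots> = (\<Sum>H\<in>A. a H * (exp (- y * B) * (1 - y * (S H - B))))"
    by (simp add: algebra_simps sum_distrib_left sum_distrib_right sum_subtractf sum.distrib)
  also have "\<dots> \<le> (\<Sum>H\<in>A. a H * exp (- y * S H))"
  proof (intro sum_mono mult_left_mono)
    fix H
    have "exp (- y * B) * (1 - y * (S H - B)) \<le> exp (- y * B) * exp (- y * (S H - B))"
      using exp_ge_add_one_self[of "- y * (S H - B)"] by (intro mult_left_mono) auto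
    then show "exp (- y * B) * (1 - y * (S H - B)) \<le> exp (- y * S H)"
      by (simp add: exp_add[symmetric] algebra_simps)
  qed (use assms(1) in auto)
  finally show ?thesis .
qed

lemma prob_pmf_eq_sum_Pow:
  assumes "finite E" "set_pmf D \<subseteq> Pow E"
  shows "measure_pmf.prob D {H. P H} = (\<Sum>H\<in>{H\<in>Pow E. P H}. pmf D H)"
proof -
  have "measure_pmf.prob D {H. P H} = measure_pmf.prob D ({H. P H} \<inter> set_pmf D)"
    by (simp add: measure_Int_set_pmf)
  also have "{H. P H} \<inter> set_pmf D = {H\<in>Pow E. P H} \<inter> set_pmf D"
    using assms(2) by auto
  also have "measure_pmf.prob D \<dots> = (\<Sum>H\<in>{H\<in>Pow E. P H}. pmf D H)"
    using assms(1) by (simp add: measure_Int_set_pmf measure_measure_pmf_finite)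
  finally show ?thesis .
qed

lemma gkps_prob_both_le:
  assumes "gkps_rounding E x D" "e \<in> E" "f \<in> E" "adj e f"
  shows "measure_pmf.prob D {H. e \<in> H \<and> f \<in> H} \<le> x e * x f"
proof -
  have "e \<noteq> f" using assms(4) by (simp add: adj_def)
  have "{e, f} \<subseteq> deltaL E (fst e) \<or> {e, f} \<subseteq> deltaR E (snd e)"
    using assms(2-4) by (auto simp: adj_def deltaL_def deltaR_def)
  then have "measure_pmf.prob D {H. \<forall>g\<in>{e, f}. (g \<in> H) = True}
      \<le> (\<Prod>g\<in>{e, f}. measure_pmf.prob D {H. (g \<in> H) = True})"
    using assms(1) unfolding gkps_rounding_def by blast
  then show ?thesis
    using assms(1-3) \<open>e \<noteq> f\<close> by (simp add: gkps_rounding_def)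
qed

lemma lp_feasible_adj_mass_le_two:
  assumes "finite E" "lp_feasible E p tL tR x" "\<forall>f\<in>E. 0 < p f"
  shows "(\<Sum>f\<in>E - {e}. if adj e f then p f * x f else 0) \<le> 2"
proof -
  have nonneg: "\<forall>f\<in>E. 0 \<le> p f * x f"
    using assms(2,3) by (auto simp: lp_feasible_def less_imp_le)
  have "(\<Sum>f\<in>E - {e}. if adj e f then p f * x f else 0) \<le> (\<Sum>f\<in>E. if adj e f then p f * x f else 0)"
    using assms(1) nonneg by (intro sum_mono2) auto
  also have "\<dots> \<le> (\<Sum>f\<in>E. (if fst f = fst e then p f * x f else 0) + (if snd f = snd e then p f * x f else 0))"
    using nonneg by (intro sum_mono) (auto simp: adj_def)
  also have "\<dots> = (\<Sum>f\<in>deltaL E (fst e). p f * x f) + (\<Sum>f\<in>deltaR E (snd e). p f * x f)"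
    using assms(1) by (simp add: sum.distrib sum.inter_filter deltaL_def deltaR_def)
  also have "\<dots> \<le> 2"
    using assms(2) unfolding lp_feasible_def by (smt (verit))
  finally show ?thesis .
qed

lemma gkps_expected_nbr_mass_le:
  assumes "finite E" "gkps_rounding E x D" "lp_feasible E p tL tR x" "\<forall>f\<in>E. 0 < p f" "e \<in> E"
  shows "(\<Sum>H\<in>{H\<in>Pow E. e \<in> H}. pmf D H * nbr_mass E p H e) \<le> x e * 2"
proof -
  let ?A = "{H\<in>Pow E. e \<in> H}"
  have setD: "set_pmf D \<subseteq> Pow E" using assms(2) by (auto simp: gkps_rounding_def)
  have both: "(\<Sum>H\<in>?A. if f \<in> H then pmf D H else 0) = measure_pmf.prob D {H. e \<in> H \<and> f \<in> H}" for f
  proof -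
    have "(\<Sum>H\<in>?A. if f \<in> H then pmf D H else 0) = (\<Sum>H\<in>{H\<in>Pow E. e \<in> H \<and> f \<in> H}. pmf D H)"
      using assms(1) by (simp add: sum.inter_filter[symmetric] conj_assoc)
    then show ?thesis
      using prob_pmf_eq_sum_Pow[OF assms(1) setD, of "\<lambda>H. e \<in> H \<and> f \<in> H"] by simp
  qed
  have "(\<Sum>H\<in>?A. pmf D H * nbr_mass E p H e)
      = (\<Sum>f\<in>E - {e}. \<Sum>H\<in>?A. if adj e f then p f * (if f \<in> H then pmf D H else 0) else 0)"
    unfolding nbr_mass_def
    by (subst sum.swap) (auto simp: sum_distrib_left intro!: sum.cong split: if_splits)
  also have "\<dots> = (\<Sum>f\<in>E - {e}. if adj e f then p f * measure_pmf.prob D {H. e \<in> H \<and> f \<in> H} else 0)"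
  proof (rule sum.cong[OF refl])
    fix f
    show "(\<Sum>H\<in>?A. if adj e f then p f * (if f \<in> H then pmf D H else 0) else 0)
        = (if adj e f then p f * measure_pmf.prob D {H. e \<in> H \<and> f \<in> H} else 0)"
      using both[of f] by (cases "adj e f") (simp_all add: sum_distrib_left[symmetric])
  qed
  also have "\<dots> \<le> (\<Sum>f\<in>E - {e}. if adj e f then p f * (x e * x f) else 0)"
    using assms(4,5) gkps_prob_both_le[OF assms(2,5)]
    by (intro sum_mono) (auto intro!: mult_left_mono less_imp_le)
  also have "\<dots> = x e * (\<Sum>f\<in>E - {e}. if adj e f then p f * x f else 0)"
    by (simp add: sum_distrib_left mult.left_commute if_distrib cong: if_cong)
  also have "\<dots> \<le> x e * 2"
    using assms(3,5) lp_feasible_adj_mass_le_two[OF assms(1,3,4)]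
    by (intro mult_left_mono) (auto simp: lp_feasible_def)
  finally show ?thesis .
qed

text \<open>Averaging over the rounding first turns the neighbour mass of \<open>e\<close>, whose conditional
  mean is at most 2, into the factor \<open>exp (- 2 * y)\<close>, whose integral is \<open>g (p e)\<close>.\<close>

lemma gkps_edge_bound:
  assumes "finite E" "gkps_rounding E x D" "lp_feasible E p tL tR x" "\<forall>f\<in>E. 0 < p f \<and> p f \<le> 1" "e \<in> E"
  shows "ennreal (x e * g (p e))
    \<le> (\<Sum>H\<in>{H\<in>Pow E. e \<in> H}. ennreal (pmf D H) * (\<integral>\<^sup>+ y. ennreal (exp (- y * nbr_mass E p H e)) \<partial>Ydist (p e)))"
proof -
  let ?A = "{H\<in>Pow E. e \<in> H}"
  have setD: "set_pmf D \<subseteq> Pow E" using assms(2) by (auto simp: gkps_rounding_def)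
  have mass: "(\<Sum>H\<in>?A. pmf D H) = x e"
    using prob_pmf_eq_sum_Pow[OF assms(1) setD, of "\<lambda>H. e \<in> H"] assms(2,5) by (simp add: gkps_rounding_def)
  have xe: "0 \<le> x e" using assms(3,5) by (simp add: lp_feasible_def)
  have "ennreal (x e * g (p e)) = (\<integral>\<^sup>+ y. ennreal (x e) * ennreal (exp (- 2 * y)) \<partial>Ydist (p e))"
    using nn_integral_Ydist_exp_neg_two[of "p e"] g_ge_one_third[of "p e"] assms(4,5) xe
    by (simp add: nn_integral_cmult ennreal_mult measurable_Ydist)
  also have "\<dots> \<le> (\<integral>\<^sup>+ y. (\<Sum>H\<in>?A. ennreal (pmf D H) * ennreal (exp (- y * nbr_mass E p H e))) \<partial>Ydist (p e))"
  proof (rule nn_integral_mono_AE)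
    show "AE y in Ydist (p e). ennreal (x e) * ennreal (exp (- 2 * y))
        \<le> (\<Sum>H\<in>?A. ennreal (pmf D H) * ennreal (exp (- y * nbr_mass E p H e)))"
      using AE_Ydist_nonneg
    proof (rule eventually_mono)
      fix y :: real assume "0 \<le> y"
      then have "x e * exp (- 2 * y) \<le> (\<Sum>H\<in>?A. pmf D H * exp (- y * nbr_mass E p H e))"
        using sum_exp_neg_ge[of ?A "pmf D" "\<lambda>H. nbr_mass E p H e" 2 y]
          gkps_expected_nbr_mass_le[OF assms(1-3) _ assms(5)] assms(4) mass
        by simp
      then show "ennreal (x e) * ennreal (exp (- 2 * y))
          \<le> (\<Sum>H\<in>?A. ennreal (pmf D H) * ennreal (exp (- y * nbr_mass E p H e)))"
        using xe by (simp add: ennreal_mult[symmetric] sum_ennreal ennreal_leI)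
    qed
  qed
  also have "\<dots> = (\<Sum>H\<in>?A. ennreal (pmf D H) * (\<integral>\<^sup>+ y. ennreal (exp (- y * nbr_mass E p H e)) \<partial>Ydist (p e)))"
    by (simp add: nn_integral_sum nn_integral_cmult measurable_Ydist)
  finally show ?thesis .
qed

lemma sum_Pow_swap:
  assumes "finite E"
  shows "(\<Sum>e\<in>E. \<Sum>H\<in>{H\<in>Pow E. e \<in> H}. f e H) = (\<Sum>H\<in>Pow E. \<Sum>e\<in>H. f e H)"
proof -
  have "(\<Sum>e\<in>E. \<Sum>H\<in>{H\<in>Pow E. e \<in> H}. f e H) = (\<Sum>H\<in>Pow E. \<Sum>e\<in>{e\<in>E. e \<in> H}. f e H)"
    by (rule sum.swap_restrict) (use assms in auto)
  also have "\<dots> = (\<Sum>H\<in>Pow E. \<Sum>e\<in>H. f e H)"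
    by (intro sum.cong refl) (auto intro!: arg_cong[where f = "sum _"])
  finally show ?thesis .
qed

lemma alg1_value_eq_sum:
  assumes "finite E" "set_pmf D \<subseteq> Pow E"
  shows "alg1_value E p w D = (\<Sum>H\<in>Pow E. pmf D H * alg1_value_given E p w H)"
  unfolding alg1_value_def alg1_value_given_def
  by (subst integral_measure_pmf[of "Pow E"]) (use assms in \<open>auto simp: mult.commute\<close>)

lemma alg1_value_ge:
  fixes E :: "('a \<times> 'b) set" and w :: "'a \<times> 'b \<Rightarrow> real"
  assumes "finite E" "\<forall>f\<in>E. 0 < p f \<and> p f \<le> 1" "\<forall>f\<in>E. 0 \<le> w f"
    and "lp_feasible E p tL tR x" "gkps_rounding E x D"
  shows "(\<Sum>e\<in>E. w e * p e * x e * g (p e)) \<le> alg1_value E p w D"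
proof -
  define I where "I H e = (\<integral>\<^sup>+ y. ennreal (exp (- y * nbr_mass E p H e)) \<partial>Ydist (p e))" for H e
  have setD: "set_pmf D \<subseteq> Pow E" using assms(5) by (auto simp: gkps_rounding_def)
  have wp: "0 \<le> w e * p e" if "e \<in> E" for e
    using that assms(2,3) by (auto intro: less_imp_le)
  have xg: "0 \<le> x e * g (p e)" if "e \<in> E" for e
    using that assms(2,4) g_ge_one_third[of "p e"] by (auto simp: lp_feasible_def)
  have given: "0 \<le> alg1_value_given E p w H" if "H \<subseteq> E" for H
    unfolding alg1_value_given_def using that assms(1,3)
    by (intro integral_nonneg_AE AE_I2 alg1_matching_weight_bounds(1))
  have "ennreal (\<Sum>e\<in>E. w e * p e * x e * g (p e)) = ennreal (\<Sum>e\<in>E. w e * p e * (x e * g (p e)))"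
    by (simp add: mult.assoc)
  also have "\<dots> = (\<Sum>e\<in>E. ennreal (w e * p e * (x e * g (p e))))"
    by (rule sum_ennreal[symmetric], rule mult_nonneg_nonneg[OF wp xg])
  also have "\<dots> = (\<Sum>e\<in>E. ennreal (w e * p e) * ennreal (x e * g (p e)))"
    using wp xg by (intro sum.cong refl) (simp add: ennreal_mult)
  also have "\<dots> \<le> (\<Sum>e\<in>E. ennreal (w e * p e) * (\<Sum>H\<in>{H\<in>Pow E. e \<in> H}. ennreal (pmf D H) * I H e))"
    unfolding I_def
    by (intro sum_mono mult_left_mono gkps_edge_bound[OF assms(1,5,4,2)]) auto
  also have "\<dots> = (\<Sum>e\<in>E. \<Sum>H\<in>{H\<in>Pow E. e \<in> H}. ennreal (pmf D H) * (ennreal (w e * p e) * I H e))"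
    by (simp only: sum_distrib_left mult.left_commute)
  also have "\<dots> = (\<Sum>H\<in>Pow E. ennreal (pmf D H) * (\<Sum>e\<in>H. ennreal (w e * p e) * I H e))"
    by (simp only: sum_Pow_swap[OF assms(1)] sum_distrib_left)
  also have "\<dots> \<le> (\<Sum>H\<in>Pow E. ennreal (pmf D H) * ennreal (alg1_value_given E p w H))"
    unfolding I_def using assms(1-3)
    by (intro sum_mono mult_left_mono alg1_value_given_ge) auto
  also have "\<dots> = ennreal (alg1_value E p w D)"
  proof -
    have "(\<Sum>H\<in>Pow E. ennreal (pmf D H) * ennreal (alg1_value_given E p w H))
        = (\<Sum>H\<in>Pow E. ennreal (pmf D H * alg1_value_given E p w H))"
      using given by (intro sum.cong refl) (simp add: ennreal_mult)
    also have "\<dots> = ennreal (\<Sum>H\<in>Pow E. pmf D H * alg1_value_given E p w H)"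
      by (rule sum_ennreal) (use given in auto)
    finally show ?thesis by (simp add: alg1_value_eq_sum[OF assms(1) setD])
  qed
  finally show ?thesis
    using given alg1_value_eq_sum[OF assms(1) setD]
    by (subst (asm) ennreal_le_iff) (auto intro!: sum_nonneg)
qed

lemma sum_threshold_g_ge:
  fixes E :: "'e set" and c p :: "'e \<Rightarrow> real"
  assumes "finite E" "\<forall>e\<in>E. 0 < p e \<and> p e \<le> 1" "\<forall>e\<in>E. 0 \<le> c e" "0 < \<delta>" "\<delta> \<le> 1"
    and "\<gamma> * (\<Sum>e\<in>E. c e) = (\<Sum>e\<in>{e\<in>E. \<delta> \<le> p e}. c e)"
  shows "(\<gamma> / 3 + g \<delta> * (1 - \<gamma>)) * (\<Sum>e\<in>E. c e) \<le> (\<Sum>e\<in>E. c e * g (p e))"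
proof -
  let ?L = "\<Sum>e\<in>E. c e"
  have "(\<gamma> / 3 + g \<delta> * (1 - \<gamma>)) * ?L = (\<gamma> * ?L) / 3 + g \<delta> * (?L - \<gamma> * ?L)"
    by (simp add: algebra_simps)
  also have "\<dots> = (\<Sum>e\<in>{e\<in>E. \<delta> \<le> p e}. c e) / 3 + g \<delta> * (?L - (\<Sum>e\<in>{e\<in>E. \<delta> \<le> p e}. c e))"
    by (simp only: assms(6))
  also have "\<dots> = (\<Sum>e\<in>E. (if \<delta> \<le> p e then c e else 0) / 3 + g \<delta> * (c e - (if \<delta> \<le> p e then c e else 0)))"
    by (simp add: sum.inter_filter[OF assms(1)] sum_divide_distrib sum_distrib_left sum_subtractf sum.distrib right_diff_distrib)
  also have "\<dots> = (\<Sum>e\<in>E. c e * (if \<delta> \<le> p e then 1 / 3 else g \<delta>))"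
    by (intro sum.cong) auto
  also have "\<dots> \<le> (\<Sum>e\<in>E. c e * g (p e))"
  proof (intro sum_mono mult_left_mono)
    fix e assume "e \<in> E"
    then show "(if \<delta> \<le> p e then 1 / 3 else g \<delta>) \<le> g (p e)"
      using assms(2,5) g_ge_one_third[of "p e"] g_antimono[of "p e" \<delta>] by auto
  qed (use assms(3) in auto)
  finally show ?thesis .
qed

theorem lemma3:
  fixes E :: "('a \<times> 'b) set"
    and p w x :: "'a \<times> 'b \<Rightarrow> real"
    and tL :: "'a \<Rightarrow> nat" and tR :: "'b \<Rightarrow> nat"
    and D :: "('a \<times> 'b) set pmf"
    and \<delta> \<gamma> :: real
  assumes "finite E"
    and "\<forall>e\<in>E. 0 < p e \<and> p e \<le> 1"
    and "\<forall>e\<in>E. 0 \<le> w e"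
    and "\<forall>u. 0 < tL u" and "\<forall>v. 0 < tR v"
    and "lp_optimal E p w tL tR x"
    and "gkps_rounding E x D"
    and "0 < \<delta>" and "\<delta> < 1"
    and "0 \<le> \<gamma>" and "\<gamma> \<le> 1"
    and "\<gamma> * lp_obj E p w x = (\<Sum>e\<in>{e\<in>E. \<delta> \<le> p e}. w e * p e * x e)"
  shows "alg1_value E p w D \<ge> (\<gamma> / 3 + g \<delta> * (1 - \<gamma>)) * lp_obj E p w x"
proof -
  have feasible: "lp_feasible E p tL tR x"
    using assms(6) by (simp add: lp_optimal_def)
  have "\<forall>e\<in>E. 0 \<le> w e * p e * x e"
  proof
    fix e assume "e \<in> E"
    then have "0 \<le> w e" "0 \<le> p e" "0 \<le> x e"
      using assms(2,3) feasible by (auto simp: lp_feasible_def less_imp_le)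
    then show "0 \<le> w e * p e * x e" by simp
  qed
  then have "(\<gamma> / 3 + g \<delta> * (1 - \<gamma>)) * lp_obj E p w x \<le> (\<Sum>e\<in>E. w e * p e * x e * g (p e))"
    using sum_threshold_g_ge[OF assms(1,2) _ assms(8)] assms(9,12) by (simp add: lp_obj_def)
  also have "\<dots> \<le> alg1_value E p w D"
    by (rule alg1_value_ge[OF assms(1-3) feasible assms(7)])
  finally show ?thesis .
qed

end
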